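(* Let $d>1$ and $n\ge d$ be integers. For every $A\subseteq\mathbb{F}_2^n$, \[\lambda^*(n,d,2^{d-1},A)\le 1-\frac{\binom{n-1}{d}_2}{\binom{n}{d}_2}.\] Moreover, equality holds when $A=\{x\in\mathbb{F}_2^n:\sum_{i=1}^n x_i=0\}$, and consequently $\lambda^*(d,2^{d-1})=1-2^{-d}$.
   Context: For integers $n\ge d\ge 1$, a $d$-flat in $\mathbb{F}_2^n$ is a set $x_0+U$ with $x_0\in\mathbb{F}_2^n$ and $U$ a $d$-dimensional linear subspace of $\mathbb{F}_2^n$. For $A\subseteq\mathbb{F}_2^n$ and an integer $0\le s\le 2^d$, $\lambda^*(n,d,s,A)$ denotes the fraction of $d$-flats $Q$ in $\mathbb{F}_2^n$ with $|Q\cap A|=s$. Let $\lambda^*(n,d,s)=\max_{A}\lambda^*(n,d,s,A)$ and $\lambda^*(d,s)=\lim_{n\to\infty}\lambda^*(n,d,s)$. The Gaussian binomial coefficient is $\binom{n}{d}_2=\prod_{i=0}^{d-1}\frac{2^{n-i}-1}{2^{d-i}-1}$, the number of $d$-dimensional linear subspaces of $\mathbb{F}_2^n$. *)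

theory Defs
  imports Complex_Main "HOL-Library.Z2"
begin

text \<open>Vectors of F_2^n are functions nat => bit vanishing outside {0..<n}.\<close>

definition Fvec :: "nat \<Rightarrow> (nat \<Rightarrow> bit) set" where
  "Fvec n = {x. \<forall>i\<ge>n. x i = 0}"

definition vadd :: "(nat \<Rightarrow> bit) \<Rightarrow> (nat \<Rightarrow> bit) \<Rightarrow> (nat \<Rightarrow> bit)" where
  "vadd x y = (\<lambda>i. x i + y i)"

definition vsum :: "(nat \<Rightarrow> bit) set \<Rightarrow> (nat \<Rightarrow> bit)" where
  "vsum S = (\<lambda>i. \<Sum>v\<in>S. v i)"

text \<open>U is a d-dimensional linear subspace of F_2^n: it has a basis B of d vectors,
  i.e. B is linearly independent (distinct subsets have distinct sums; over F_2 the
  linear combinations of B are exactly the subset sums) and U is the span of B.\<close>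
definition is_subspace_dim :: "nat \<Rightarrow> nat \<Rightarrow> (nat \<Rightarrow> bit) set \<Rightarrow> bool" where
  "is_subspace_dim n d U \<longleftrightarrow>
     (\<exists>B. B \<subseteq> Fvec n \<and> finite B \<and> card B = d \<and> inj_on vsum (Pow B) \<and> U = vsum ` Pow B)"

definition is_flat :: "nat \<Rightarrow> nat \<Rightarrow> (nat \<Rightarrow> bit) set \<Rightarrow> bool" where
  "is_flat n d Q \<longleftrightarrow>
     (\<exists>x0 U. x0 \<in> Fvec n \<and> is_subspace_dim n d U \<and> Q = vadd x0 ` U)"

definition lambda_star_A :: "nat \<Rightarrow> nat \<Rightarrow> nat \<Rightarrow> (nat \<Rightarrow> bit) set \<Rightarrow> real" where
  "lambda_star_A n d s A =
     real (card {Q. is_flat n d Q \<and> card (Q \<inter> A) = s}) / real (card {Q. is_flat n d Q})"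

definition lambda_star_n :: "nat \<Rightarrow> nat \<Rightarrow> nat \<Rightarrow> real" where
  "lambda_star_n n d s = Max ((\<lambda>A. lambda_star_A n d s A) ` Pow (Fvec n))"

definition lambda_star :: "nat \<Rightarrow> nat \<Rightarrow> real" where
  "lambda_star d s = lim (\<lambda>n. lambda_star_n n d s)"

definition gauss_binom :: "nat \<Rightarrow> nat \<Rightarrow> real" where
  "gauss_binom n d = (\<Prod>i<d. (2 ^ (n - i) - 1) / (2 ^ (d - i) - 1))"

end

theory Submission
  imports Defs "HOL-Library.Function_Algebras"
begin

text \<open>
  Give every point of F_2^n the sign +1 or -1 according as it lies in A or not, and call the
  sign sum over a flat its discrepancy. A d-flat meets A in exactly 2^(d-1) points iff its
  discrepancy vanishes, and otherwise its squared discrepancy is at most 4^d; so 4^d times the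
  number of unbalanced pairs (x, U) of a point and a d-subspace bounds the second moment of the
  discrepancy from above. Expanding the square expresses the second moment through the
  autocorrelation of the sign function summed over the subspaces; since transvections act
  transitively on the nonzero vectors, every nonzero vector lies in the same number of
  d-subspaces, and the second moment is at least its value for a sign function of total sum
  zero. For the even-weight vectors the total sign sum is zero and every flat is either balanced
  or inside one parity class, so both estimates are equalities.
\<close>

lemma sum_fun_apply: "(\<Sum>a\<in>A. f a) i = (\<Sum>a\<in>A. f a i)"
  by (induction A rule: infinite_finite_induct) simp_all

lemma sum_translate:
  fixes u :: "'a :: cancel_semigroup_add"
  assumes "finite X" "\<And>v. v \<in> X \<Longrightarrow> v + u \<in> X"
  shows "(\<Sum>v\<in>X. g (v + u)) = sum g X"
proof -
  have "inj_on (\<lambda>v. v + u) X"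
    by (rule inj_onI) simp
  moreover have "(\<lambda>v. v + u) ` X = X"
    using assms \<open>inj_on (\<lambda>v. v + u) X\<close> by (intro endo_inj_surj) auto
  ultimately have "bij_betw (\<lambda>v. v + u) X X"
    by (simp add: bij_betw_def)
  then show ?thesis
    by (rule sum.reindex_bij_betw)
qed

lemma sum_sum_members:
  fixes h :: "'a \<Rightarrow> 'b :: comm_semiring_1"
  assumes "finite V" "finite \<U>" "\<And>U. U \<in> \<U> \<Longrightarrow> U \<subseteq> V"
  shows "(\<Sum>U\<in>\<U>. \<Sum>w\<in>U. h w) = (\<Sum>w\<in>V. of_nat (card {U\<in>\<U>. w \<in> U}) * h w)"
proof -
  have "(\<Sum>w\<in>U. h w) = (\<Sum>w\<in>V. if w \<in> U then h w else 0)" if "U \<in> \<U>" for U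
    using sum.inter_restrict[OF assms(1), of h U] assms(3)[OF that] by (simp add: Int_absorb1)
  then have "(\<Sum>U\<in>\<U>. \<Sum>w\<in>U. h w) = (\<Sum>w\<in>V. \<Sum>U\<in>\<U>. if w \<in> U then h w else 0)"
    by (simp add: sum.swap[of _ V])
  also have "\<dots> = (\<Sum>w\<in>V. of_nat (card {U\<in>\<U>. w \<in> U}) * h w)"
    using assms(2) by (simp add: sum.inter_filter[symmetric])
  finally show ?thesis .
qed

lemma card_eq_mult_card_image:
  assumes "finite A" "\<And>b. b \<in> f ` A \<Longrightarrow> card {a\<in>A. f a = b} = k"
  shows "card A = k * card (f ` A)"
proof -
  have "(\<Sum>a\<in>A. card {b\<in>f ` A. f a = b}) = k * card (f ` A)"
    using assms by (intro sum_multicount) auto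
  moreover have "{b\<in>f ` A. f a = b} = {f a}" if "a \<in> A" for a
    using that by auto
  ultimately show ?thesis
    by simp
qed

lemma sum_mult_of_bool_case_prod:
  assumes "finite X"
  shows "(\<Sum>(x, y)\<in>X. c * of_bool (P x y)) = c * of_nat (card {(x, y) \<in> X. P x y})"
proof -
  have "{(x, y) \<in> X. P x y} = X \<inter> {p. P (fst p) (snd p)}"
    by auto
  then show ?thesis
    using assms by (simp add: case_prod_beta sum_distrib_left[symmetric])
qed

section \<open>Vectors, subspaces and flats of F_2^n\<close>

declare add_bit_eq_xor [simp del] mult_bit_eq_and [simp del]

lemma add_self_bitvec [simp]: "(x :: 'a \<Rightarrow> bit) + x = 0"
  by (simp add: fun_eq_iff)

lemma sum_add_sum_bitvec:
  fixes f :: "'a \<Rightarrow> 'b \<Rightarrow> bit"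
  assumes "finite A" "finite B"
  shows "sum f A + sum f B = sum f ((A - B) \<union> (B - A))"
proof -
  have "sum f A = sum f (A - B) + sum f (A \<inter> B)"
    using sum.Int_Diff[OF assms(1), of f B] by (simp add: add.commute)
  moreover have "sum f B = sum f (B - A) + sum f (A \<inter> B)"
    using sum.Int_Diff[OF assms(2), of f A] by (simp add: add.commute Int_commute)
  moreover have "sum f ((A - B) \<union> (B - A)) = sum f (A - B) + sum f (B - A)"
    using assms by (intro sum.union_disjoint) auto
  ultimately show ?thesis
    by (simp add: ac_simps)
qed

lemma vadd_eq_plus: "vadd = (+)"
  by (simp add: vadd_def fun_eq_iff)

lemma vsum_eq_Sum: "vsum S = \<Sum>S"
  by (simp add: vsum_def sum_fun_apply fun_eq_iff)

lemma zero_Fvec [simp]: "0 \<in> Fvec n"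
  by (simp add: Fvec_def)

lemma add_Fvec [intro]: "x \<in> Fvec n \<Longrightarrow> y \<in> Fvec n \<Longrightarrow> x + y \<in> Fvec n"
  by (simp add: Fvec_def)

lemma Sum_Fvec: "S \<subseteq> Fvec n \<Longrightarrow> \<Sum>S \<in> Fvec n"
  by (induction S rule: infinite_finite_induct) auto

lemma bij_betw_Pow_Fvec: "bij_betw (\<lambda>S i. of_bool (i \<in> S)) (Pow {..<n}) (Fvec n)"
proof (rule bij_betw_byWitness[where f' = "\<lambda>x. {i. x i = 1}"])
  show "\<forall>x\<in>Fvec n. (\<lambda>i. of_bool (i \<in> {i. x i = 1})) = x"
    by (auto simp: fun_eq_iff of_bool_def)
  show "(\<lambda>x. {i. x i = 1}) ` Fvec n \<subseteq> Pow {..<n}"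
    by (auto simp: Fvec_def) (metis not_less zero_neq_one)
qed (auto simp: Fvec_def)

lemma finite_Fvec [simp]: "finite (Fvec n)"
  and card_Fvec: "card (Fvec n) = 2 ^ n"
  using bij_betw_finite[OF bij_betw_Pow_Fvec] bij_betw_same_card[OF bij_betw_Pow_Fvec]
  by (simp_all add: card_Pow)

definition unit_vec :: "nat \<Rightarrow> nat \<Rightarrow> bit" where
  "unit_vec i = (\<lambda>j. of_bool (j = i))"

lemma unit_vec_Fvec: "i < n \<Longrightarrow> unit_vec i \<in> Fvec n"
  by (simp add: unit_vec_def Fvec_def)

lemma unit_vec_nonzero: "unit_vec i \<noteq> 0"
  by (simp add: unit_vec_def fun_eq_iff)

lemma inj_unit_vec: "inj unit_vec"
  by (rule injI) (metis unit_vec_def of_bool_eq_iff)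

definition subspaces :: "nat \<Rightarrow> nat \<Rightarrow> (nat \<Rightarrow> bit) set set" where
  "subspaces n d = {U. is_subspace_dim n d U}"

lemma subspacesE:
  assumes "U \<in> subspaces n d"
  obtains B where "B \<subseteq> Fvec n" "finite B" "card B = d" "inj_on vsum (Pow B)" "U = vsum ` Pow B"
  using assms by (auto simp: subspaces_def is_subspace_dim_def)

lemma subspace_subset_Fvec: "U \<in> subspaces n d \<Longrightarrow> U \<subseteq> Fvec n"
  by (erule subspacesE) (auto simp: vsum_eq_Sum intro: Sum_Fvec)

lemma finite_subspace: "U \<in> subspaces n d \<Longrightarrow> finite U"
  by (erule subspacesE) simp

lemma card_subspace: "U \<in> subspaces n d \<Longrightarrow> card U = 2 ^ d"
  by (erule subspacesE) (simp add: card_image card_Pow)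

lemma zero_in_subspace: "U \<in> subspaces n d \<Longrightarrow> 0 \<in> U"
  by (erule subspacesE) (auto simp: vsum_eq_Sum image_iff intro!: bexI[of _ "{}"])

lemma add_in_subspace:
  assumes "U \<in> subspaces n d" "x \<in> U" "y \<in> U"
  shows "x + y \<in> U"
proof -
  obtain B where B: "finite B" "U = vsum ` Pow B"
    using assms(1) by (rule subspacesE)
  then obtain S1 S2 where "S1 \<subseteq> B" "S2 \<subseteq> B" "x = \<Sum>S1" "y = \<Sum>S2"
    using assms(2,3) by (auto simp: vsum_eq_Sum)
  with B show ?thesis
    by (auto simp: vsum_eq_Sum sum_add_sum_bitvec finite_subset)
qed

lemma finite_subspaces [simp]: "finite (subspaces n d)"
  by (rule finite_subset[of _ "Pow (Fvec n)"]) (auto dest: subspace_subset_Fvec)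

lemma subspaces_nonempty:
  assumes "d \<le> n"
  shows "subspaces n d \<noteq> {}"
proof -
  define B where "B = unit_vec ` {..<d}"
  have vsum_apply: "vsum S j = of_bool (unit_vec j \<in> S)" if "S \<subseteq> B" for S j
  proof -
    have "vsum S j = (\<Sum>v\<in>S. of_bool (v = unit_vec j))"
      unfolding vsum_def using that inj_unit_vec
      by (intro sum.cong refl) (auto simp: B_def unit_vec_def inj_eq)
    also have "\<dots> = of_bool (unit_vec j \<in> S)"
      using finite_subset[OF that] by (simp add: B_def of_bool_def sum.delta')
    finally show ?thesis .
  qed
  have "inj_on vsum (Pow B)"
  proof (rule inj_onI)
    fix S1 S2 assume S: "S1 \<in> Pow B" "S2 \<in> Pow B" and eq: "vsum S1 = vsum S2"
    have "unit_vec j \<in> S1 \<longleftrightarrow> unit_vec j \<in> S2" for j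
      using fun_cong[OF eq, of j] S by (simp add: vsum_apply of_bool_eq_iff)
    with S show "S1 = S2"
      by (auto simp: B_def)
  qed
  moreover have "B \<subseteq> Fvec n" "finite B" "card B = d"
    using assms inj_unit_vec by (auto simp: B_def unit_vec_Fvec card_image inj_on_subset)
  ultimately have "vsum ` Pow B \<in> subspaces n d"
    by (auto simp: subspaces_def is_subspace_dim_def)
  then show ?thesis
    by blast
qed

lemma subspace_image:
  assumes "additive T" "inj T" "T ` Fvec n \<subseteq> Fvec n" "U \<in> subspaces n d"
  shows "T ` U \<in> subspaces n d"
proof -
  obtain B where B: "B \<subseteq> Fvec n" "finite B" "card B = d" "inj_on vsum (Pow B)" "U = vsum ` Pow B"
    using assms(4) by (rule subspacesE)
  have T_vsum: "T (vsum S) = vsum (T ` S)" for S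
    using inj_on_subset[OF assms(2) subset_UNIV]
    by (simp add: vsum_eq_Sum additive.sum[OF assms(1)] sum.reindex)
  have "inj_on vsum (Pow (T ` B))"
  proof (rule inj_onI)
    fix S1 S2 assume "S1 \<in> Pow (T ` B)" "S2 \<in> Pow (T ` B)" and eq: "vsum S1 = vsum S2"
    then obtain R1 R2 where R: "R1 \<subseteq> B" "R2 \<subseteq> B" "S1 = T ` R1" "S2 = T ` R2"
      by (auto simp: subset_image_iff)
    then have "T (vsum R1) = T (vsum R2)"
      using eq by (simp add: T_vsum)
    then have "R1 = R2"
      using R(1,2) by (intro inj_onD[OF B(4)]) (simp_all add: inj_eq[OF assms(2)])
    then show "S1 = S2"
      using R by simp
  qed
  moreover have "T ` U = vsum ` Pow (T ` B)"
  proof -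
    have "T ` U = (\<lambda>S. vsum (T ` S)) ` Pow B"
      by (simp add: B(5) image_image T_vsum)
    also have "\<dots> = vsum ` Pow (T ` B)"
      by (simp add: image_Pow_surj[OF refl, symmetric] image_image)
    finally show ?thesis .
  qed
  moreover have "T ` B \<subseteq> Fvec n" "card (T ` B) = d"
    using B assms(2,3) by (auto simp: card_image inj_on_subset[OF assms(2) subset_UNIV])
  ultimately show ?thesis
    using B(2) by (auto simp: subspaces_def is_subspace_dim_def)
qed

lemma exists_index_set_sum_eq_1:
  fixes w w' :: "nat \<Rightarrow> bit"
  assumes "w \<noteq> 0" "w' \<noteq> 0"
  obtains I where "finite I" "(\<Sum>i\<in>I. w i) = 1" "(\<Sum>i\<in>I. w' i) = 1"
proof -
  obtain i j where ij: "w i = 1" "w' j = 1"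
    using assms by (auto simp: fun_eq_iff)
  consider "w' i = 1" | "w j = 1" | "w' i = 0" "w j = 0"
    by (metis bit_not_one_iff)
  then show ?thesis
  proof cases
    case 1
    then show ?thesis
      using ij by (intro that[of "{i}"]) simp_all
  next
    case 2
    then show ?thesis
      using ij by (intro that[of "{j}"]) simp_all
  next
    case 3
    then have "i \<noteq> j"
      using ij by auto
    with 3 show ?thesis
      using ij by (intro that[of "{i, j}"]) simp_all
  qed
qed

lemma card_subspaces_containing_le:
  assumes "w \<in> Fvec n" "w' \<in> Fvec n" "w \<noteq> 0" "w' \<noteq> 0"
  shows "card {U \<in> subspaces n d. w \<in> U} \<le> card {U \<in> subspaces n d. w' \<in> U}"
proof -
  obtain I where I: "finite I" "(\<Sum>i\<in>I. w i) = 1" "(\<Sum>i\<in>I. w' i) = 1"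
    using assms(3,4) by (rule exists_index_set_sum_eq_1)
  define \<phi> where "\<phi> x = (\<Sum>i\<in>I. x i)" for x :: "nat \<Rightarrow> bit"
  \<comment> \<open>the transvection fixing the hyperplane \<phi> = 0 pointwise and mapping w to w'\<close>
  define T where "T x = x + (\<lambda>i. \<phi> x * (w + w') i)" for x
  have \<phi>_add: "\<phi> (x + y) = \<phi> x + \<phi> y" for x y
    by (simp add: \<phi>_def sum.distrib)
  have \<phi>_T: "\<phi> (T x) = \<phi> x" for x
    using I by (simp add: T_def \<phi>_def sum.distrib sum_distrib_left[symmetric])
  have "additive T"
    by unfold_locales (simp add: T_def \<phi>_add fun_eq_iff algebra_simps)
  moreover have "inj T"
  proof (rule inj_on_inverseI)
    show "T (T x) = x" for x
      unfolding T_def[of "T x"] \<phi>_T by (simp add: T_def add.assoc)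
  qed
  moreover have "T ` Fvec n \<subseteq> Fvec n"
    using assms(1,2) by (auto simp: T_def Fvec_def)
  ultimately have "image T ` {U \<in> subspaces n d. w \<in> U} \<subseteq> {U \<in> subspaces n d. T w \<in> U}"
    by (auto intro: subspace_image)
  moreover have "T w = w'"
    using I by (simp add: T_def \<phi>_def fun_eq_iff)
  moreover have "inj_on (image T) {U \<in> subspaces n d. w \<in> U}"
    using \<open>inj T\<close> by (simp add: inj_on_def inj_image_eq_iff)
  ultimately show ?thesis
    by (intro card_inj_on_le) auto
qed

lemma card_subspaces_containing_eq:
  assumes "w \<in> Fvec n" "w' \<in> Fvec n" "w \<noteq> 0" "w' \<noteq> 0"
  shows "card {U \<in> subspaces n d. w \<in> U} = card {U \<in> subspaces n d. w' \<in> U}"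
  using assms by (intro antisym card_subspaces_containing_le)

lemma sum_sum_subspaces:
  fixes h :: "(nat \<Rightarrow> bit) \<Rightarrow> real"
  assumes "0 < n"
  shows "(\<Sum>U\<in>subspaces n d. \<Sum>w\<in>U. h w)
    = card (subspaces n d) * h 0 + card {U \<in> subspaces n d. unit_vec 0 \<in> U} * (\<Sum>w\<in>Fvec n - {0}. h w)"
proof -
  have "(\<Sum>U\<in>subspaces n d. \<Sum>w\<in>U. h w) = (\<Sum>w\<in>Fvec n. card {U \<in> subspaces n d. w \<in> U} * h w)"
    by (intro sum_sum_members) (auto dest: subspace_subset_Fvec)
  also have "\<dots> = card {U \<in> subspaces n d. 0 \<in> U} * h 0
      + (\<Sum>w\<in>Fvec n - {0}. card {U \<in> subspaces n d. w \<in> U} * h w)"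
    by (simp add: sum.remove[OF finite_Fvec zero_Fvec])
  also have "{U \<in> subspaces n d. 0 \<in> U} = subspaces n d"
    by (auto intro: zero_in_subspace)
  also have "(\<Sum>w\<in>Fvec n - {0}. card {U \<in> subspaces n d. w \<in> U} * h w)
      = (\<Sum>w\<in>Fvec n - {0}. card {U \<in> subspaces n d. unit_vec 0 \<in> U} * h w)"
  proof (rule sum.cong[OF refl])
    fix w assume "w \<in> Fvec n - {0}"
    then show "card {U \<in> subspaces n d. w \<in> U} * h w = card {U \<in> subspaces n d. unit_vec 0 \<in> U} * h w"
      using assms card_subspaces_containing_eq[of w n "unit_vec 0" d]
      by (simp add: unit_vec_Fvec unit_vec_nonzero)
  qed
  finally show ?thesis
    by (simp only: sum_distrib_left)
qed

lemma card_subspaces_containing_unit_vec: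
  assumes "0 < n"
  shows "card {U \<in> subspaces n d. unit_vec 0 \<in> U} * (2 ^ n - 1 :: real) = card (subspaces n d) * (2 ^ d - 1)"
proof -
  have "card (subspaces n d) * (2 ^ d :: real) = (\<Sum>U\<in>subspaces n d. \<Sum>w\<in>U. 1)"
    by (simp add: card_subspace)
  also have "\<dots> = real (card (subspaces n d)) * 1
      + card {U \<in> subspaces n d. unit_vec 0 \<in> U} * (\<Sum>w\<in>Fvec n - {0}. 1 :: real)"
    by (rule sum_sum_subspaces[OF assms])
  also have "(\<Sum>w\<in>Fvec n - {0}. 1 :: real) = 2 ^ n - 1"
    by (simp add: card_Fvec of_nat_diff)
  finally show ?thesis
    by (simp add: algebra_simps)
qed

definition flat :: "(nat \<Rightarrow> bit) \<Rightarrow> (nat \<Rightarrow> bit) set \<Rightarrow> (nat \<Rightarrow> bit) set" where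
  "flat x U = (+) x ` U"

lemma is_flat_iff: "is_flat n d Q \<longleftrightarrow> (\<exists>x\<in>Fvec n. \<exists>U\<in>subspaces n d. Q = flat x U)"
  by (auto simp: is_flat_def flat_def subspaces_def vadd_eq_plus)

lemma finite_flat: "U \<in> subspaces n d \<Longrightarrow> finite (flat x U)"
  by (simp add: flat_def finite_subspace)

lemma card_flat: "U \<in> subspaces n d \<Longrightarrow> card (flat x U) = 2 ^ d"
  by (simp add: flat_def card_image card_subspace)

lemma flat_subset_Fvec: "x \<in> Fvec n \<Longrightarrow> U \<in> subspaces n d \<Longrightarrow> flat x U \<subseteq> Fvec n"
  by (auto simp: flat_def dest: subspace_subset_Fvec)

lemma mem_flat_self: "U \<in> subspaces n d \<Longrightarrow> x \<in> flat x U"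
  by (auto simp: flat_def intro: image_eqI[of _ _ 0] zero_in_subspace)

lemma flat_translate:
  assumes "U \<in> subspaces n d" "u \<in> U"
  shows "flat (x + u) U = flat x U"
proof -
  have "(+) u ` U = U"
  proof
    show "(+) u ` U \<subseteq> U"
      using assms by (auto intro: add_in_subspace)
    show "U \<subseteq> (+) u ` U"
      using assms by (auto intro!: image_eqI[of _ _ "u + v" for v] add_in_subspace)
  qed
  then show ?thesis
    by (simp add: flat_def image_image add.assoc flip: image_image[of "(+) x" "(+) u"])
qed

lemma flat_eq_if_mem:
  assumes "U \<in> subspaces n d" "y \<in> flat x U"
  shows "flat y U = flat x U"
proof -
  obtain u where "u \<in> U" "y = x + u"
    using assms(2) by (auto simp: flat_def)
  then show ?thesis
    using flat_translate[OF assms(1)] by simp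
qed

lemma flat_eq_flat_iff:
  assumes "U \<in> subspaces n d" "U' \<in> subspaces n d"
  shows "flat x U = flat x' U' \<longleftrightarrow> U = U' \<and> x' \<in> flat x U"
proof
  assume eq: "flat x U = flat x' U'"
  then have "x' \<in> flat x U"
    using mem_flat_self[OF assms(2)] by simp
  then have "flat x' U = flat x' U'"
    using eq flat_eq_if_mem[OF assms(1)] by metis
  then have "U = U'"
    by (simp add: flat_def inj_image_eq_iff)
  with \<open>x' \<in> flat x U\<close> show "U = U' \<and> x' \<in> flat x U"
    by simp
next
  assume "U = U' \<and> x' \<in> flat x U"
  then show "flat x U = flat x' U'"
    using flat_eq_if_mem[OF assms(1)] by auto
qed

lemma flat_fiber:
  assumes "x \<in> Fvec n" "U \<in> subspaces n d"
  shows "{(y, V) \<in> Fvec n \<times> subspaces n d. flat y V = flat x U} = (\<lambda>y. (y, U)) ` flat x U"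
proof (intro equalityI subsetI)
  fix p assume "p \<in> {(y, V) \<in> Fvec n \<times> subspaces n d. flat y V = flat x U}"
  then obtain y V where p: "p = (y, V)" "V \<in> subspaces n d" "flat x U = flat y V"
    by auto
  then show "p \<in> (\<lambda>y. (y, U)) ` flat x U"
    using flat_eq_flat_iff[OF assms(2) p(2)] by auto
next
  fix p assume "p \<in> (\<lambda>y. (y, U)) ` flat x U"
  then obtain y where "p = (y, U)" "y \<in> flat x U"
    by auto
  then show "p \<in> {(y, V) \<in> Fvec n \<times> subspaces n d. flat y V = flat x U}"
    using assms flat_subset_Fvec[OF assms] flat_eq_if_mem[OF assms(2)] by auto
qed

lemma card_pairs_eq_card_flats:
  "card {(x, U) \<in> Fvec n \<times> subspaces n d. R (flat x U)} = 2 ^ d * card {Q. is_flat n d Q \<and> R Q}"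
proof -
  let ?P = "{(x, U) \<in> Fvec n \<times> subspaces n d. R (flat x U)}"
  have fiber: "{p \<in> ?P. case_prod flat p = flat x U} = (\<lambda>y. (y, U)) ` flat x U"
    if "x \<in> Fvec n" "U \<in> subspaces n d" "R (flat x U)" for x U
    using flat_fiber[OF that(1,2)] that(3) flat_eq_if_mem[OF that(2)] by auto
  have "card ?P = 2 ^ d * card (case_prod flat ` ?P)"
  proof (rule card_eq_mult_card_image)
    show "finite ?P"
      by (rule finite_subset[of _ "Fvec n \<times> subspaces n d"]) auto
    fix Q assume "Q \<in> case_prod flat ` ?P"
    then obtain x U where xU: "x \<in> Fvec n" "U \<in> subspaces n d" "R (flat x U)" and Q: "Q = flat x U"
      by auto
    show "card {p \<in> ?P. case_prod flat p = Q} = 2 ^ d"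
      unfolding Q fiber[OF xU] by (simp add: card_image inj_on_def card_flat[OF xU(2)])
  qed
  also have "case_prod flat ` ?P = {Q. is_flat n d Q \<and> R Q}"
    by (auto simp: is_flat_iff)
  finally show ?thesis .
qed

lemma lambda_star_A_eq_pairs:
  "lambda_star_A n d s A
    = card {(x, U) \<in> Fvec n \<times> subspaces n d. card (flat x U \<inter> A) = s} / card (Fvec n \<times> subspaces n d)"
  using card_pairs_eq_card_flats[of n d "\<lambda>Q. card (Q \<inter> A) = s"]
    card_pairs_eq_card_flats[of n d "\<lambda>_. True"]
  by (simp add: lambda_star_A_def)

section \<open>Second moment of the discrepancy\<close>

definition signed_indicator :: "'a set \<Rightarrow> 'a \<Rightarrow> real" where
  "signed_indicator A y = (if y \<in> A then 1 else -1)"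

definition discrepancy :: "'a set \<Rightarrow> 'a set \<Rightarrow> real" where
  "discrepancy A Q = (\<Sum>y\<in>Q. signed_indicator A y)"

lemma signed_indicator_sq [simp]: "signed_indicator A y * signed_indicator A y = 1"
  by (simp add: signed_indicator_def)

lemma discrepancy_eq_card:
  assumes "finite Q"
  shows "discrepancy A Q = 2 * real (card (Q \<inter> A)) - real (card Q)"
proof -
  have "discrepancy A Q = real (card (Q \<inter> A)) - real (card (Q - A))"
    using assms by (simp add: discrepancy_def signed_indicator_def sum.If_cases Diff_eq)
  moreover have "card Q = card (Q \<inter> A) + card (Q - A)"
    using assms by (metis card_Int_Diff)
  ultimately show ?thesis
    by simp
qed

lemma discrepancy_eq_0_iff: "finite Q \<Longrightarrow> discrepancy A Q = 0 \<longleftrightarrow> 2 * card (Q \<inter> A) = card Q"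
  using of_nat_eq_iff[of "2 * card (Q \<inter> A)" "card Q", where 'a = real]
  by (simp add: discrepancy_eq_card)

lemma abs_discrepancy_le: "finite Q \<Longrightarrow> \<bar>discrepancy A Q\<bar> \<le> card Q"
  using card_mono[of Q "Q \<inter> A"] by (simp add: discrepancy_eq_card)

lemma discrepancy_flat: "discrepancy A (flat x U) = (\<Sum>u\<in>U. signed_indicator A (x + u))"
  by (simp add: discrepancy_def flat_def sum.reindex)

definition autocorrelation :: "nat \<Rightarrow> (nat \<Rightarrow> bit) set \<Rightarrow> (nat \<Rightarrow> bit) \<Rightarrow> real" where
  "autocorrelation n A w = (\<Sum>x\<in>Fvec n. signed_indicator A x * signed_indicator A (x + w))"

lemma autocorrelation_0: "autocorrelation n A 0 = 2 ^ n"
  by (simp add: autocorrelation_def card_Fvec)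

lemma sum_autocorrelation:
  "(\<Sum>w\<in>Fvec n. autocorrelation n A w) = (\<Sum>x\<in>Fvec n. signed_indicator A x)\<^sup>2"
proof -
  have "(\<Sum>w\<in>Fvec n. autocorrelation n A w)
      = (\<Sum>x\<in>Fvec n. signed_indicator A x * (\<Sum>w\<in>Fvec n. signed_indicator A (w + x)))"
    unfolding autocorrelation_def by (subst sum.swap) (simp add: sum_distrib_left add.commute)
  also have "\<dots> = (\<Sum>x\<in>Fvec n. signed_indicator A x * (\<Sum>w\<in>Fvec n. signed_indicator A w))"
    by (intro sum.cong refl arg_cong2[where f = "(*)"] sum_translate) auto
  finally show ?thesis
    by (simp add: power2_eq_square sum_distrib_right)
qed

lemma sum_discrepancy_sq_translates:
  assumes "U \<in> subspaces n d"
  shows "(\<Sum>x\<in>Fvec n. (discrepancy A (flat x U))\<^sup>2) = 2 ^ d * (\<Sum>w\<in>U. autocorrelation n A w)"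
proof -
  have U: "finite U" "U \<subseteq> Fvec n" "card U = 2 ^ d" "\<And>u v. u \<in> U \<Longrightarrow> v \<in> U \<Longrightarrow> v + u \<in> U"
    using assms by (auto simp: finite_subspace subspace_subset_Fvec card_subspace add_in_subspace)
  have "(\<Sum>x\<in>Fvec n. signed_indicator A (x + u) * signed_indicator A (x + v)) = autocorrelation n A (u + v)"
    if "u \<in> U" for u v
    using sum_translate[of "Fvec n" u "\<lambda>x. signed_indicator A x * signed_indicator A (x + u + v)"] that U(2)
    by (auto simp: autocorrelation_def add.assoc)
  then have "(\<Sum>x\<in>Fvec n. (discrepancy A (flat x U))\<^sup>2) = (\<Sum>u\<in>U. \<Sum>v\<in>U. autocorrelation n A (v + u))"
    unfolding discrepancy_flat power2_eq_square sum_product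
    by (subst sum.swap, subst sum.swap) (simp add: add.commute)
  also have "\<dots> = (\<Sum>u\<in>U. \<Sum>w\<in>U. autocorrelation n A w)"
    using U by (intro sum.cong refl sum_translate) auto
  finally show ?thesis
    using U(3) by simp
qed

lemma sum_discrepancy_sq_pairs:
  assumes "d \<le> n" "0 < n"
  shows "(\<Sum>(x, U)\<in>Fvec n \<times> subspaces n d. (discrepancy A (flat x U))\<^sup>2)
    = 4 ^ d * real (card (Fvec n \<times> subspaces n d)) * ((2 ^ (n - d) - 1) / (2 ^ n - 1))
      + 2 ^ d * real (card {U \<in> subspaces n d. unit_vec 0 \<in> U}) * (\<Sum>x\<in>Fvec n. signed_indicator A x)\<^sup>2"
proof -
  define M where "M = real (card (subspaces n d))"
  define N where "N = real (card {U \<in> subspaces n d. unit_vec 0 \<in> U})"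
  define F where "F = (\<Sum>x\<in>Fvec n. signed_indicator A x)"
  have "(\<Sum>(x, U)\<in>Fvec n \<times> subspaces n d. (discrepancy A (flat x U))\<^sup>2)
      = (\<Sum>U\<in>subspaces n d. \<Sum>x\<in>Fvec n. (discrepancy A (flat x U))\<^sup>2)"
    by (simp add: sum.cartesian_product[symmetric] sum.swap[of _ "Fvec n"])
  also have "\<dots> = 2 ^ d * (\<Sum>U\<in>subspaces n d. \<Sum>w\<in>U. autocorrelation n A w)"
    by (simp add: sum_discrepancy_sq_translates sum_distrib_left)
  also have "\<dots> = 2 ^ d * (M * 2 ^ n + N * (F\<^sup>2 - 2 ^ n))"
  proof -
    have "(\<Sum>w\<in>Fvec n - {0}. autocorrelation n A w) = F\<^sup>2 - 2 ^ n"
      using sum.remove[OF finite_Fvec[of n] zero_Fvec[of n], of "autocorrelation n A"]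
      by (simp add: autocorrelation_0 sum_autocorrelation F_def)
    then show ?thesis
      by (simp add: sum_sum_subspaces[OF assms(2)] autocorrelation_0 M_def N_def)
  qed
  also have "\<dots> = 4 ^ d * (2 ^ n * M) * ((2 ^ (n - d) - 1) / (2 ^ n - 1)) + 2 ^ d * N * F\<^sup>2"
  proof -
    define a b where "a = (2 :: real) ^ d" and "b = (2 :: real) ^ (n - d)"
    have pow_n: "(2 :: real) ^ n = a * b"
      using assms(1) by (simp add: a_def b_def flip: power_add)
    have pow_d: "(4 :: real) ^ d = a * a"
      by (simp add: a_def flip: power_mult_distrib)
    have "N * (a * b - 1) = M * (a - 1)"
      using card_subspaces_containing_unit_vec[OF assms(2)] by (simp add: M_def N_def a_def pow_n)
    then have "a * (M * (a * b) + N * (F\<^sup>2 - a * b)) * (a * b - 1)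
        = a * a * (a * b * M) * (b - 1) + a * N * F\<^sup>2 * (a * b - 1)"
      by algebra
    moreover have "a * b - 1 \<noteq> 0"
      using assms(2) one_less_power[of "2 :: real" n] by (simp add: pow_n)
    ultimately show ?thesis
      by (simp add: pow_n pow_d flip: a_def b_def) (simp add: field_simps)
  qed
  finally show ?thesis
    by (simp add: M_def N_def F_def card_cartesian_product card_Fvec)
qed

lemma sum_discrepancy_sq_pairs_le:
  "(\<Sum>(x, U)\<in>Fvec n \<times> subspaces n d. (discrepancy A (flat x U))\<^sup>2)
    \<le> 4 ^ d * real (card {(x, U) \<in> Fvec n \<times> subspaces n d. discrepancy A (flat x U) \<noteq> 0})"
proof -
  have "(discrepancy A (flat x U))\<^sup>2 \<le> 4 ^ d * of_bool (discrepancy A (flat x U) \<noteq> 0)"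
    if "U \<in> subspaces n d" for x U
  proof -
    have "\<bar>discrepancy A (flat x U)\<bar> \<le> \<bar>2 ^ d\<bar>"
      using abs_discrepancy_le[OF finite_flat[OF that]] by (simp add: card_flat[OF that])
    then have "(discrepancy A (flat x U))\<^sup>2 \<le> (2 ^ d)\<^sup>2"
      by (simp only: abs_le_square_iff)
    then show ?thesis
      by (simp add: power2_eq_square flip: power_mult_distrib)
  qed
  then have "(\<Sum>(x, U)\<in>Fvec n \<times> subspaces n d. (discrepancy A (flat x U))\<^sup>2)
      \<le> (\<Sum>(x, U)\<in>Fvec n \<times> subspaces n d. 4 ^ d * of_bool (discrepancy A (flat x U) \<noteq> 0))"
    by (intro sum_mono) auto
  also have "\<dots> = 4 ^ d * real (card {(x, U) \<in> Fvec n \<times> subspaces n d. discrepancy A (flat x U) \<noteq> 0})"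
    by (simp add: sum_mult_of_bool_case_prod)
  finally show ?thesis .
qed

section \<open>Even-weight vectors\<close>

definition parity :: "nat \<Rightarrow> (nat \<Rightarrow> bit) \<Rightarrow> bit" where
  "parity n x = (\<Sum>i<n. x i)"

definition even_weight :: "nat \<Rightarrow> (nat \<Rightarrow> bit) set" where
  "even_weight n = {x \<in> Fvec n. parity n x = 0}"

lemma parity_add: "parity n (x + y) = parity n x + parity n y"
  by (simp add: parity_def sum.distrib)

lemma signed_indicator_even_weight_add:
  assumes "x \<in> Fvec n" "w \<in> Fvec n"
  shows "signed_indicator (even_weight n) (x + w)
    = (if parity n w = 0 then 1 else -1) * signed_indicator (even_weight n) x"
  using assms by (auto simp: signed_indicator_def even_weight_def parity_add)

lemma sum_signed_indicator_even_weight: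
  assumes "0 < n"
  shows "(\<Sum>x\<in>Fvec n. signed_indicator (even_weight n) x) = 0"
proof -
  have e: "unit_vec 0 \<in> Fvec n" "parity n (unit_vec 0) = 1"
    using assms by (simp add: unit_vec_Fvec, simp add: parity_def unit_vec_def)
  have "(\<Sum>x\<in>Fvec n. signed_indicator (even_weight n) x)
      = (\<Sum>x\<in>Fvec n. signed_indicator (even_weight n) (x + unit_vec 0))"
    using e by (intro sum_translate[symmetric]) auto
  also have "\<dots> = - (\<Sum>x\<in>Fvec n. signed_indicator (even_weight n) x)"
    using e by (simp add: signed_indicator_even_weight_add sum_negf)
  finally show ?thesis
    by simp
qed

lemma discrepancy_even_weight_flat:
  assumes "x \<in> Fvec n" "U \<in> subspaces n d"
  shows "discrepancy (even_weight n) (flat x U) = 0 \<or> \<bar>discrepancy (even_weight n) (flat x U)\<bar> = 2 ^ d"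
proof (cases "\<exists>w\<in>U. parity n w = 1")
  case True
  then obtain w where w: "w \<in> U" "parity n w = 1"
    by blast
  have xU: "x + u \<in> Fvec n" if "u \<in> U" for u
    using assms that subspace_subset_Fvec by blast
  have "discrepancy (even_weight n) (flat x U) = (\<Sum>u\<in>U. signed_indicator (even_weight n) (x + (u + w)))"
    unfolding discrepancy_flat using assms(2) w
    by (intro sum_translate[of U w "\<lambda>u. signed_indicator (even_weight n) (x + u)", symmetric])
      (auto simp: finite_subspace add_in_subspace)
  also have "\<dots> = (\<Sum>u\<in>U. - signed_indicator (even_weight n) (x + u))"
  proof (rule sum.cong[OF refl])
    fix u assume "u \<in> U"
    then show "signed_indicator (even_weight n) (x + (u + w)) = - signed_indicator (even_weight n) (x + u)"
      using signed_indicator_even_weight_add[OF xU[of u], of w] w subspace_subset_Fvec[OF assms(2)]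
      by (auto simp: add.assoc)
  qed
  also have "\<dots> = - discrepancy (even_weight n) (flat x U)"
    by (simp add: discrepancy_flat sum_negf)
  finally show ?thesis
    by simp
next
  case False
  then have "signed_indicator (even_weight n) (x + u) = signed_indicator (even_weight n) x" if "u \<in> U" for u
    using that assms subspace_subset_Fvec[OF assms(2)]
    by (auto simp: signed_indicator_even_weight_add)
  then have "discrepancy (even_weight n) (flat x U) = 2 ^ d * signed_indicator (even_weight n) x"
    by (simp add: discrepancy_flat card_subspace[OF assms(2)])
  then show ?thesis
    by (simp add: signed_indicator_def)
qed

lemma sum_discrepancy_sq_pairs_even_weight:
  "(\<Sum>(x, U)\<in>Fvec n \<times> subspaces n d. (discrepancy (even_weight n) (flat x U))\<^sup>2)
    = 4 ^ d * real (card {(x, U) \<in> Fvec n \<times> subspaces n d. discrepancy (even_weight n) (flat x U) \<noteq> 0})"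
proof -
  have "(discrepancy (even_weight n) (flat x U))\<^sup>2 = 4 ^ d * of_bool (discrepancy (even_weight n) (flat x U) \<noteq> 0)"
    if "x \<in> Fvec n" "U \<in> subspaces n d" for x U
  proof (cases "discrepancy (even_weight n) (flat x U) = 0")
    case False
    then have "\<bar>discrepancy (even_weight n) (flat x U)\<bar> = 2 ^ d"
      using discrepancy_even_weight_flat[OF that] by simp
    then have "(discrepancy (even_weight n) (flat x U))\<^sup>2 = (2 ^ d)\<^sup>2"
      by (metis power2_abs)
    with False show ?thesis
      by (simp add: power2_eq_square flip: power_mult_distrib)
  qed simp
  then have "(\<Sum>(x, U)\<in>Fvec n \<times> subspaces n d. (discrepancy (even_weight n) (flat x U))\<^sup>2)
      = (\<Sum>(x, U)\<in>Fvec n \<times> subspaces n d. 4 ^ d * of_bool (discrepancy (even_weight n) (flat x U) \<noteq> 0))"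
    by (intro sum.cong refl) auto
  also have "\<dots> = 4 ^ d
      * real (card {(x, U) \<in> Fvec n \<times> subspaces n d. discrepancy (even_weight n) (flat x U) \<noteq> 0})"
    by (simp add: sum_mult_of_bool_case_prod)
  finally show ?thesis .
qed

section \<open>Density of balanced flats\<close>

lemma card_pairs_pos: "d \<le> n \<Longrightarrow> 0 < card (Fvec n \<times> subspaces n d)"
  using subspaces_nonempty[of d n] by (auto simp: card_cartesian_product card_Fvec card_gt_0_iff)

lemma lambda_star_A_half_eq_unbalanced:
  assumes "0 < d" "d \<le> n"
  shows "lambda_star_A n d (2 ^ (d - 1)) A
    = 1 - card {(x, U) \<in> Fvec n \<times> subspaces n d. discrepancy A (flat x U) \<noteq> 0}
          / card (Fvec n \<times> subspaces n d)"
proof -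
  let ?X = "Fvec n \<times> subspaces n d"
  let ?B = "{(x, U) \<in> ?X. discrepancy A (flat x U) \<noteq> 0}"
  have "card (flat x U \<inter> A) = 2 ^ (d - 1) \<longleftrightarrow> discrepancy A (flat x U) = 0"
    if "U \<in> subspaces n d" for x U
    using assms(1) power_Suc[of "2 :: nat" "d - 1"]
    by (simp add: discrepancy_eq_0_iff finite_flat[OF that] card_flat[OF that])
  then have "{(x, U) \<in> ?X. card (flat x U \<inter> A) = 2 ^ (d - 1)} = ?X - ?B"
    by auto
  moreover have B: "?B \<subseteq> ?X" "finite ?B"
    by (auto intro: finite_subset[of _ ?X])
  ultimately have "card {(x, U) \<in> ?X. card (flat x U \<inter> A) = 2 ^ (d - 1)} = card ?X - card ?B"
    by (simp only: card_Diff_subset)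
  moreover have "card ?B \<le> card ?X"
    using B by (intro card_mono) auto
  ultimately have "real (card {(x, U) \<in> ?X. card (flat x U \<inter> A) = 2 ^ (d - 1)})
      = real (card ?X) - real (card ?B)"
    by (simp only: of_nat_diff)
  moreover have "real (card ?X) \<noteq> 0"
    using card_pairs_pos[OF assms(2)] by (simp only: of_nat_eq_0_iff neq0_conv)
  ultimately show ?thesis
    unfolding lambda_star_A_eq_pairs by (simp add: field_simps)
qed

lemma lambda_star_A_half_le:
  assumes "0 < d" "d \<le> n"
  shows "lambda_star_A n d (2 ^ (d - 1)) A \<le> 1 - (2 ^ (n - d) - 1) / (2 ^ n - 1)"
proof -
  let ?X = "Fvec n \<times> subspaces n d"
  let ?B = "{(x, U) \<in> ?X. discrepancy A (flat x U) \<noteq> 0}"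
  define c :: real where "c = (2 ^ (n - d) - 1) / (2 ^ n - 1)"
  have "4 ^ d * (real (card ?X) * c) \<le> (\<Sum>(x, U)\<in>?X. (discrepancy A (flat x U))\<^sup>2)"
    using assms sum_discrepancy_sq_pairs[of d n A] by (simp add: c_def mult.assoc)
  also have "\<dots> \<le> 4 ^ d * real (card ?B)"
    by (rule sum_discrepancy_sq_pairs_le)
  finally have "c * real (card ?X) \<le> real (card ?B)"
    by (simp add: mult.commute)
  then have "c \<le> real (card ?B) / real (card ?X)"
    using card_pairs_pos[OF assms(2)] by (simp only: pos_le_divide_eq of_nat_0_less_iff)
  then show ?thesis
    unfolding lambda_star_A_half_eq_unbalanced[OF assms] c_def by simp
qed

lemma lambda_star_A_even_weight:
  assumes "0 < d" "d \<le> n"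
  shows "lambda_star_A n d (2 ^ (d - 1)) (even_weight n) = 1 - (2 ^ (n - d) - 1) / (2 ^ n - 1)"
proof -
  let ?X = "Fvec n \<times> subspaces n d"
  let ?B = "{(x, U) \<in> ?X. discrepancy (even_weight n) (flat x U) \<noteq> 0}"
  define c :: real where "c = (2 ^ (n - d) - 1) / (2 ^ n - 1)"
  have "4 ^ d * (real (card ?X) * c) = (\<Sum>(x, U)\<in>?X. (discrepancy (even_weight n) (flat x U))\<^sup>2)"
    using assms sum_discrepancy_sq_pairs[of d n "even_weight n"]
    by (simp add: c_def mult.assoc sum_signed_indicator_even_weight)
  also have "\<dots> = 4 ^ d * real (card ?B)"
    by (rule sum_discrepancy_sq_pairs_even_weight)
  finally have "c * real (card ?X) = real (card ?B)"
    by (simp add: mult.commute)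
  then have "c = real (card ?B) / real (card ?X)"
    using card_pairs_pos[OF assms(2)] by (simp only: nonzero_eq_divide_eq of_nat_0_less_iff less_irrefl)
  then show ?thesis
    unfolding lambda_star_A_half_eq_unbalanced[OF assms] c_def by simp
qed

lemma lambda_star_n_half:
  assumes "0 < d" "d \<le> n"
  shows "lambda_star_n n d (2 ^ (d - 1)) = 1 - (2 ^ (n - d) - 1) / (2 ^ n - 1)"
  unfolding lambda_star_n_def
proof (rule Max_eqI)
  show "y \<le> 1 - (2 ^ (n - d) - 1) / (2 ^ n - 1)"
    if "y \<in> (\<lambda>A. lambda_star_A n d (2 ^ (d - 1)) A) ` Pow (Fvec n)" for y
    using that lambda_star_A_half_le[OF assms] by blast
  have "even_weight n \<in> Pow (Fvec n)"
    by (auto simp: even_weight_def)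
  then show "1 - (2 ^ (n - d) - 1) / (2 ^ n - 1) \<in> (\<lambda>A. lambda_star_A n d (2 ^ (d - 1)) A) ` Pow (Fvec n)"
    unfolding lambda_star_A_even_weight[OF assms, symmetric] by (rule imageI)
qed simp

lemma gauss_binom_ratio:
  assumes "d \<le> n" "0 < n"
  shows "gauss_binom (n - 1) d / gauss_binom n d = (2 ^ (n - d) - 1) / (2 ^ n - 1)"
proof -
  define f where "f i = (2 :: real) ^ (n - i) - 1" for i
  define P where "P m = (\<Prod>i<d. (2 :: real) ^ (m - i) - 1)" for m
  define Q where "Q = (\<Prod>i<d. (2 :: real) ^ (d - i) - 1)"
  have gauss: "gauss_binom m d = P m / Q" for m
    by (simp add: gauss_binom_def P_def Q_def prod_dividef)
  have "P (n - 1) * f 0 = (\<Prod>i<d. f (Suc i)) * f 0"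
    by (simp add: P_def f_def)
  also have "\<dots> = (\<Prod>i<Suc d. f i)"
    by (simp only: prod.lessThan_Suc_shift mult.commute)
  also have "\<dots> = P n * f d"
    by (simp add: P_def f_def)
  finally have telescope: "P (n - 1) * (2 ^ n - 1) = P n * (2 ^ (n - d) - 1)"
    by (simp add: f_def)
  have "Q > 0" "P n > 0" "(2 :: real) ^ n - 1 > 0"
    using assms by (auto intro!: prod_pos simp: Q_def P_def one_less_power)
  with telescope show ?thesis
    by (simp add: gauss field_simps)
qed

lemma tendsto_lambda_star_n_half:
  assumes "0 < d"
  shows "(\<lambda>m. lambda_star_n m d (2 ^ (d - 1))) \<longlonglongrightarrow> 1 - 1 / 2 ^ d"
proof -
  have "(\<lambda>m. 1 - (1 / 2 ^ d - (1 / 2) ^ m) / (1 - (1 / 2) ^ m))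
      \<longlonglongrightarrow> 1 - (1 / 2 ^ d - 0) / (1 - 0 :: real)"
    by (intro tendsto_intros LIMSEQ_power_zero) simp_all
  moreover have "\<forall>\<^sub>F m in sequentially.
      1 - (1 / 2 ^ d - (1 / 2) ^ m) / (1 - (1 / 2) ^ m) = lambda_star_n m d (2 ^ (d - 1))"
  proof (rule eventually_sequentiallyI)
    fix m assume "d \<le> m"
    have "(2 :: real) ^ m = 2 ^ d * 2 ^ (m - d)" "(1 / 2 :: real) ^ m = 1 / 2 ^ m"
      using \<open>d \<le> m\<close> by (simp_all add: power_one_over flip: power_add)
    moreover have "(2 :: real) ^ m > 1"
      using \<open>d \<le> m\<close> assms by (simp add: one_less_power)
    ultimately show "1 - (1 / 2 ^ d - (1 / 2) ^ m) / (1 - (1 / 2) ^ m) = lambda_star_n m d (2 ^ (d - 1))"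
      unfolding lambda_star_n_half[OF assms \<open>d \<le> m\<close>] by (simp add: field_simps)
  qed
  ultimately show ?thesis
    by (simp add: Lim_transform_eventually)
qed

theorem lemma3p1:
  fixes n d :: nat
  assumes "d > 1" and "n \<ge> d"
  shows "(\<forall>A \<subseteq> Fvec n.
            lambda_star_A n d (2 ^ (d - 1)) A \<le> 1 - gauss_binom (n - 1) d / gauss_binom n d)
       \<and> lambda_star_A n d (2 ^ (d - 1)) {x \<in> Fvec n. (\<Sum>i<n. x i) = 0}
            = 1 - gauss_binom (n - 1) d / gauss_binom n d
       \<and> (\<lambda>m. lambda_star_n m d (2 ^ (d - 1))) \<longlonglongrightarrow> 1 - 1 / 2 ^ d
       \<and> lambda_star d (2 ^ (d - 1)) = 1 - 1 / 2 ^ d"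
proof -
  have "0 < d" "0 < n"
    using assms by auto
  note ratio = gauss_binom_ratio[OF assms(2) \<open>0 < n\<close>]
  have "{x \<in> Fvec n. (\<Sum>i<n. x i) = 0} = even_weight n"
    by (simp add: even_weight_def parity_def)
  moreover note lim = tendsto_lambda_star_n_half[OF \<open>0 < d\<close>]
  ultimately show ?thesis
    unfolding ratio lambda_star_def
    using lambda_star_A_half_le[OF \<open>0 < d\<close> assms(2)] lambda_star_A_even_weight[OF \<open>0 < d\<close> assms(2)]
      limI[OF lim]
    by simp
qed

end
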